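(* Fix an integer $r\ge 2$. For integers $n\ge 1$ and $L\ge 0$ let $$G_2(n,r,L)=\frac{2^{r+1}-1}{2^{r}-1}\left(2^{rL}-1\right)+M_r\!\left(\lfloor n/2^{L}\rfloor\right)-r-1,$$ where $M_r(k)=\binom{k+r}{r}$. Let $L_{op}=L_{op}(n)$ be a value of $L\ge 0$ minimizing $G_2(n,r,L)$, and put $$L^*(n)=\frac{1}{2r}\log_2\frac{2^r-1}{r!\,(2^{r+1}-1)}+\frac{\log_2 n}{2},\qquad K_r=\sqrt{4\,\frac{2^{r+1}-1}{2^r-1}\,\frac{1}{r!}} .$$ Then, asymptotically as $n\to\infty$, $L_{op}$ lies in the interval $[L^*(n)-\tfrac12,\;L^*(n)+\tfrac12]$ up to an error tending to $0$ (i.e. $L^*(n)-\tfrac12-\delta_n\le L_{op}\le L^*(n)+\tfrac12+\delta_n$ with $\delta_n\to 0$), so $L_{op}$ is the integer closest to $L^*(n)$; and for all sufficiently large $n$, $$\frac{1}{\sqrt{2^r}}\,K_r\, n^{r/2}\;<\;G_2(n,r,L_{op})\;<\;\sqrt{2^r}\,K_r\, n^{r/2}.$$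
   Context: $\lfloor x\rfloor$ denotes the integer part of $x$; $M_r(k)=\binom{k+r}{r}$ is the number of monomials of degree at most $k$ in $r$ variables. Interpretation (not needed for the claim): $G_2(n,r,L)$ counts the field multiplications used to evaluate a degree-$n$ polynomial in $\mathbb{F}_2[x_1,\dots,x_r]$ at a point of $\mathbb{F}_{2^m}^r$ by applying $L$ times the decomposition $P=\sum_{i_1,\dots,i_r\in\{0,1\}}x_1^{i_1}\cdots x_r^{i_r}\,P_{i_1,\dots,i_r}(x_1,\dots,x_r)^2$ and evaluating all monomials of degree at most $\lfloor n/2^L\rfloor$ directly. *)

theory Defs
  imports Complex_Main
begin

text \<open>Number of monomials of degree at most k in r variables.\<close>
definition M :: "nat \<Rightarrow> nat \<Rightarrow> nat" where
  "M r k = (k + r) choose r"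

text \<open>G_2(n,r,L); the floor of n / 2^L for natural n is n div 2^L.\<close>
definition G2 :: "nat \<Rightarrow> nat \<Rightarrow> nat \<Rightarrow> real" where
  "G2 n r L = (2 ^ (r + 1) - 1) / (2 ^ r - 1) * (2 ^ (r * L) - 1)
              + real (M r (n div 2 ^ L)) - real r - 1"

definition Lstar :: "nat \<Rightarrow> nat \<Rightarrow> real" where
  "Lstar r n = 1 / (2 * real r) * log 2 ((2 ^ r - 1) / (fact r * (2 ^ (r + 1) - 1)))
               + log 2 (real n) / 2"

definition K :: "nat \<Rightarrow> real" where
  "K r = sqrt (4 * ((2 ^ (r + 1) - 1) / (2 ^ r - 1)) * (1 / fact r))"

end

theory Submission
  imports Defs "HOL-Real_Asymp.Real_Asymp"
begin

(* Write c = (2^(r+1)-1)/(2^r-1), a = r (L - L*(n)) and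
   S(n) = c 2^(r L*(n)) = sqrt (c n^r / r!)   (the "balanced cost", see bal_eq).
   Then exactly c 2^(rL) = S 2^a and (n/2^L)^r / r! = S 2^(-a) (cost_terms), while
   M_r(floor (n/2^L)) = (n/2^L)^r/r! up to a relative error eta plus a constant
   (M_approx).  Hence G2 n r L = S (2^a + 2^(-a)) up to the relative error eta
   plus a constant (G2_approx): the cost is, to first order, S times the even
   function twocosh a = 2^a + 2^(-a), which increases in |a|.
   Comparing the minimiser Lop with the integer nearest to L* (cost at most about
   S twocosh (r/2)) and using S(n) -> infinity forces |Lop - L*| <= 1/2 + eps for
   large n (Lop_near_Lstar), and squeezes G2 (Lop n) between about 2 S and about
   S (sqrt (2^r) + 1/sqrt (2^r)); since K r n^(r/2) = 2 S (K_eq) this gives the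
   stated bounds (optimal_cost_bounds). *)

text \<open>Since \<open>r! M_r(k) = (k+1)(k+2)\<cdots>(k+r)\<close>, it lies between \<open>k^r\<close> and \<open>(k+r)^r\<close>.\<close>
lemma M_bounds:
  fixes r k :: nat
  shows "real k ^ r \<le> fact r * real (M r k)"
    and "fact r * real (M r k) \<le> (real k + real r) ^ r"
proof -
  have M_pochhammer: "fact r * real (M r k) = (\<Prod>i<r. real k + 1 + real i)"
    unfolding M_def binomial_gbinomial gbinomial_pochhammer' pochhammer_prod
    by (simp add: atLeast0LessThan)
  show "real k ^ r \<le> fact r * real (M r k)"
    unfolding M_pochhammer using prod_mono[of "{..<r}" "\<lambda>_. real k"] by simp
  show "fact r * real (M r k) \<le> (real k + real r) ^ r"
    unfolding M_pochhammer
    using prod_mono[of "{..<r}" "\<lambda>i. real k + 1 + real i" "\<lambda>_. real k + real r"] by simp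
qed

lemma shifted_power_asymp:
  fixes t \<eta> :: real and r :: nat
  assumes "\<eta> > 0"
  shows "\<forall>\<^sub>F v in at_top. \<bar>(v + t) ^ r - v ^ r\<bar> \<le> \<eta> * v ^ r"
proof -
  have "((\<lambda>v::real. t / v) \<longlongrightarrow> 0) at_top"
    by (rule tendsto_divide_0[OF tendsto_const filterlim_at_top_imp_at_infinity[OF filterlim_ident]])
  then have "((\<lambda>v::real. (1 + t / v) ^ r) \<longlongrightarrow> (1 + 0) ^ r) at_top"
    by (intro tendsto_intros)
  then have "\<forall>\<^sub>F v in at_top. \<bar>(1 + t / v) ^ r - 1\<bar> < \<eta>"
    using assms by (simp add: tendsto_iff dist_real_def)
  then show ?thesis using eventually_gt_at_top[of "0::real"]
  proof eventually_elim
    case (elim v)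
    have "v * (1 + t / v) = v + t" using elim(2) by (simp add: field_simps)
    then have "(v + t) ^ r - v ^ r = v ^ r * ((1 + t / v) ^ r - 1)"
      by (metis power_mult_distrib right_diff_distrib mult.right_neutral)
    also have "\<bar>\<dots>\<bar> = v ^ r * \<bar>(1 + t / v) ^ r - 1\<bar>"
      using elim(2) by (simp add: abs_mult)
    also have "\<dots> \<le> v ^ r * \<eta>"
      using elim by (intro mult_left_mono) auto
    finally show ?case by (simp add: mult.commute)
  qed
qed

lemma M_approx:
  fixes r :: nat and \<eta> :: real
  assumes "\<eta> > 0"
  obtains C where "\<And>v k. 0 \<le> v \<Longrightarrow> v - 1 \<le> real k \<Longrightarrow> real k \<le> v \<Longrightarrow>
      \<bar>fact r * real (M r k) - v ^ r\<bar> \<le> \<eta> * v ^ r + C"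
proof -
  have "\<forall>\<^sub>F v in at_top. 1 \<le> v \<and> \<bar>(v + real r) ^ r - v ^ r\<bar> \<le> \<eta> * v ^ r
                          \<and> \<bar>(v + -1) ^ r - v ^ r\<bar> \<le> \<eta> * v ^ r"
    using assms by (intro eventually_conj eventually_ge_at_top shifted_power_asymp)
  then obtain V where V: "\<And>v. V \<le> v \<Longrightarrow> 1 \<le> v \<and> \<bar>(v + real r) ^ r - v ^ r\<bar> \<le> \<eta> * v ^ r
                          \<and> \<bar>(v + -1) ^ r - v ^ r\<bar> \<le> \<eta> * v ^ r"
    by (auto simp: eventually_at_top_linorder)
  show thesis
  proof (rule that)
    fix v :: real and k :: nat
    assume v: "0 \<le> v" "v - 1 \<le> real k" "real k \<le> v"
    note M = M_bounds[where r=r and k=k]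
    show "\<bar>fact r * real (M r k) - v ^ r\<bar> \<le> \<eta> * v ^ r + (V + real r) ^ r"
    proof (cases "V \<le> v")
      case True
      have "(v + -1) ^ r \<le> real k ^ r" "(real k + real r) ^ r \<le> (v + real r) ^ r"
        using V[OF True] v by (auto intro: power_mono)
      moreover have "0 \<le> (V + real r) ^ r" using V[of V] by simp
      ultimately show ?thesis using V[OF True] M by linarith
    next
      case False
      have "(real k + real r) ^ r \<le> (V + real r) ^ r" "v ^ r \<le> (V + real r) ^ r"
        using False v by (auto intro!: power_mono)
      moreover have "0 \<le> \<eta> * v ^ r" "0 \<le> v ^ r" "0 \<le> real k ^ r" using assms v by auto
      ultimately show ?thesis using M by linarith
    qed
  qed
qed

lemma div_power_bounds:
  fixes n L :: nat
  shows "real n / 2 ^ L - 1 \<le> real (n div 2 ^ L)" and "real (n div 2 ^ L) \<le> real n / 2 ^ L"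
  using floor_divide_of_nat_eq[of n "2 ^ L", where 'a=real]
    of_int_floor_le[of "real n / 2 ^ L"] real_of_int_floor_add_one_gt[of "real n / 2 ^ L"]
  by simp_all

text \<open>The shape of the leading-order cost as a function of \<open>a = r (L - L\<^sup>*)\<close>.\<close>
definition twocosh :: "real \<Rightarrow> real" where
  "twocosh a = 2 powr a + 2 powr (- a)"

lemma twocosh_abs: "twocosh \<bar>a\<bar> = twocosh a"
  unfolding twocosh_def by (cases "a \<ge> 0") auto

text \<open>\<open>x + 1/x\<close> is strictly increasing for \<open>x \<ge> 1\<close>.\<close>
lemma twocosh_strict_mono_nonneg:
  assumes "0 \<le> a" "a < b"
  shows "twocosh a < twocosh b"
proof -
  define x y where "x = (2::real) powr a" and "y = (2::real) powr b"
  have xy: "1 \<le> x" "x < y" unfolding x_def y_def using assms by (auto intro: ge_one_powr_ge_zero)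
  have "y + 1 / y - (x + 1 / x) = (y - x) * (x * y - 1) / (x * y)"
    using xy by (simp add: field_simps)
  moreover have "0 < (y - x) * (x * y - 1) / (x * y)"
    using xy by (smt (verit) divide_pos_pos mult_less_cancel_left1 mult_pos_pos)
  ultimately show ?thesis
    unfolding twocosh_def x_def y_def by (simp add: powr_minus_divide)
qed

lemma twocosh_mono_abs: "\<bar>a\<bar> \<le> \<bar>b\<bar> \<Longrightarrow> twocosh a \<le> twocosh b"
  by (metis abs_ge_zero order.order_iff_strict twocosh_abs twocosh_strict_mono_nonneg)

lemma twocosh_strict_mono_abs: "\<bar>a\<bar> < \<bar>b\<bar> \<Longrightarrow> twocosh a < twocosh b"
  by (metis abs_ge_zero twocosh_abs twocosh_strict_mono_nonneg)

lemma twocosh_ge_2: "2 \<le> twocosh a"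
  using twocosh_mono_abs[of 0 a] by (simp add: twocosh_def)

definition coef :: "nat \<Rightarrow> real" where
  "coef r = (2 ^ (r + 1) - 1) / (2 ^ r - 1)"

lemma coef_pos:
  assumes "1 \<le> r" shows "0 < coef r"
proof -
  have "1 < (2::real) ^ r" using assms by simp
  then show ?thesis unfolding coef_def by simp
qed

text \<open>The balanced cost: the common value of both leading terms of \<open>G\<^sub>2\<close> at \<open>L = L\<^sup>*\<close>.\<close>
definition bal :: "nat \<Rightarrow> nat \<Rightarrow> real" where
  "bal r n = coef r * 2 powr (real r * Lstar r n)"

text \<open>\<open>L\<^sup>*\<close> is defined so that \<open>c 2^(2 r L\<^sup>*) r! = n^r\<close>.\<close>
lemma two_powr_r_Lstar:
  assumes "1 \<le> r" "1 \<le> n"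
  shows "2 powr (real r * Lstar r n) = sqrt (real n ^ r / (coef r * fact r))"
proof -
  have A: "(2 ^ r - 1) / (fact r * (2 ^ (r + 1) - 1)) = 1 / (coef r * fact r)"
    unfolding coef_def by (simp add: field_simps)
  have pos: "0 < real n ^ r / (coef r * fact r)" using assms coef_pos by simp
  have "real r * Lstar r n = log 2 (real n ^ r / (coef r * fact r)) / 2"
    unfolding Lstar_def A using assms pos coef_pos[of r]
    by (simp add: log_divide log_nat_power field_simps)
  also have "2 powr \<dots> = (2 powr log 2 (real n ^ r / (coef r * fact r))) powr (1/2)"
    by (simp add: powr_powr)
  finally show ?thesis using pos by (simp add: powr_half_sqrt)
qed

lemma bal_eq:
  assumes "1 \<le> r" "1 \<le> n"
  shows "bal r n = sqrt (coef r * real n ^ r / fact r)"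
proof -
  have c: "0 < coef r" by (rule coef_pos[OF assms(1)])
  have "bal r n = sqrt (coef r ^ 2) * sqrt (real n ^ r / (coef r * fact r))"
    unfolding bal_def two_powr_r_Lstar[OF assms] using c by simp
  also have "\<dots> = sqrt (coef r ^ 2 * (real n ^ r / (coef r * fact r)))"
    by (simp only: real_sqrt_mult)
  also have "coef r ^ 2 * (real n ^ r / (coef r * fact r)) = coef r * real n ^ r / fact r"
    using c by (simp add: power2_eq_square)
  finally show ?thesis .
qed

lemma bal_pos: "1 \<le> r \<Longrightarrow> 0 < bal r n"
  unfolding bal_def using coef_pos by simp

lemma K_eq:
  assumes "1 \<le> r" "1 \<le> n"
  shows "K r * real n powr (real r / 2) = 2 * bal r n"
proof -
  have "real n powr (real r / 2) = sqrt (real n ^ r)"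
    using assms by (simp add: powr_half_sqrt[symmetric] powr_powr powr_realpow[symmetric])
  then have "K r * real n powr (real r / 2) = sqrt (4 * (coef r * real n ^ r / fact r))"
    unfolding K_def coef_def[symmetric] by (simp add: real_sqrt_mult[symmetric])
  also have "\<dots> = 2 * sqrt (coef r * real n ^ r / fact r)"
    by (metis real_sqrt_four real_sqrt_mult times_divide_eq_right)
  finally show ?thesis unfolding bal_eq[OF assms] .
qed

lemma bal_unbounded:
  assumes "1 \<le> r"
  shows "\<forall>\<^sub>F n in sequentially. D < bal r n"
proof -
  have c: "0 < coef r" by (rule coef_pos[OF assms])
  have "\<forall>\<^sub>F n in sequentially. D\<^sup>2 * fact r / coef r < real n"
    using filterlim_real_sequentially by (simp add: filterlim_at_top_dense)
  then show ?thesis using eventually_ge_at_top[of "1::nat"]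
  proof eventually_elim
    case (elim n)
    have "real n \<le> real n ^ r" using elim(2) assms
      by (metis One_nat_def of_nat_1 of_nat_le_iff power_increasing power_one_right)
    then have "coef r * real n / fact r \<le> coef r * real n ^ r / fact r"
      using c by (intro divide_right_mono mult_left_mono) simp_all
    moreover have "D\<^sup>2 < coef r * real n / fact r"
      using elim(1) c by (simp add: field_simps)
    ultimately have "D\<^sup>2 < coef r * real n ^ r / fact r" by linarith
    then show ?case unfolding bal_eq[OF assms elim(2)] by (rule real_less_rsqrt)
  qed
qed

lemma cost_terms:
  assumes "1 \<le> r" "1 \<le> n"
  shows "coef r * 2 ^ (r * L) = bal r n * 2 powr (real r * (real L - Lstar r n))"
    and "(real n / 2 ^ L) ^ r / fact r = bal r n * 2 powr (- (real r * (real L - Lstar r n)))"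
proof -
  define X where "X = 2 powr (real r * Lstar r n)"
  have X: "0 < X" "coef r * X ^ 2 = real n ^ r / fact r"
    unfolding X_def two_powr_r_Lstar[OF assms] using assms coef_pos[of r] by auto
  have "2 powr (real r * (real L - Lstar r n)) = 2 powr (real r * real L) / X"
    unfolding X_def by (simp add: right_diff_distrib powr_diff)
  also have "2 powr (real r * real L) = (2::real) ^ (r * L)"
    by (simp add: powr_realpow[symmetric])
  finally have shift: "2 powr (real r * (real L - Lstar r n)) = 2 ^ (r * L) / X" .
  then have shift': "2 powr (- (real r * (real L - Lstar r n))) = X / 2 ^ (r * L)"
    by (simp add: powr_minus_divide)
  show "coef r * 2 ^ (r * L) = bal r n * 2 powr (real r * (real L - Lstar r n))"
    unfolding bal_def X_def[symmetric] shift using X(1) by simp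
  show "(real n / 2 ^ L) ^ r / fact r = bal r n * 2 powr (- (real r * (real L - Lstar r n)))"
  proof -
    have "(real n / 2 ^ L) ^ r / fact r = (real n ^ r / fact r) / 2 ^ (r * L)"
      by (simp add: power_divide power_mult[symmetric] mult.commute[of L])
    also have "\<dots> = coef r * X * (X / 2 ^ (r * L))"
      unfolding X(2)[symmetric] by (simp add: power2_eq_square)
    finally show ?thesis unfolding bal_def X_def[symmetric] shift' .
  qed
qed

lemma G2_approx:
  assumes r: "1 \<le> r" and \<eta>: "0 < \<eta>"
  obtains C where "\<And>n L. 1 \<le> n \<Longrightarrow>
    \<bar>G2 n r L - bal r n * twocosh (real r * (real L - Lstar r n))\<bar>
      \<le> \<eta> * (bal r n * twocosh (real r * (real L - Lstar r n))) + C"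
proof -
  obtain C where C: "\<And>v k. 0 \<le> v \<Longrightarrow> v - 1 \<le> real k \<Longrightarrow> real k \<le> v \<Longrightarrow>
      \<bar>fact r * real (M r k) - v ^ r\<bar> \<le> \<eta> * v ^ r + C"
    using M_approx[OF \<eta>] by blast
  show thesis
  proof (rule that)
    fix n L :: nat assume n: "1 \<le> n"
    define a where "a = real r * (real L - Lstar r n)"
    define v where "v = real n / 2 ^ L"
    define k where "k = n div 2 ^ L"
    have G2_eq: "G2 n r L - bal r n * twocosh a = (real (M r k) - v ^ r / fact r) - (coef r + r + 1)"
      using cost_terms[OF r n, of L]
      unfolding G2_def twocosh_def a_def v_def k_def coef_def[symmetric]
      by (simp add: algebra_simps)
    have f: "(0::real) < fact r" by simp
    have "\<bar>real (M r k) - v ^ r / fact r\<bar> = \<bar>fact r * real (M r k) - v ^ r\<bar> / fact r"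
      using f by (simp add: field_simps flip: abs_div_pos)
    also have "\<dots> \<le> (\<eta> * v ^ r + C) / fact r"
      using C div_power_bounds[of n L] f unfolding v_def k_def by (simp add: divide_right_mono)
    finally have "\<bar>real (M r k) - v ^ r / fact r\<bar> \<le> \<eta> * (v ^ r / fact r) + C / fact r"
      by (simp add: add_divide_distrib)
    moreover have "v ^ r / fact r \<le> bal r n * twocosh a"
      using cost_terms(2)[OF r n, of L] bal_pos[OF r, of n]
      unfolding twocosh_def a_def v_def by simp
    ultimately have "\<bar>real (M r k) - v ^ r / fact r\<bar> \<le> \<eta> * (bal r n * twocosh a) + C / fact r"
      using \<eta> by (smt (verit) mult_left_mono)
    then show "\<bar>G2 n r L - bal r n * twocosh a\<bar>
        \<le> \<eta> * (bal r n * twocosh a) + (C / fact r + coef r + r + 1)"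
      unfolding G2_eq using coef_pos[OF r] by linarith
  qed
qed

lemma nearest_nat:
  fixes x :: real
  assumes "0 \<le> x"
  obtains L :: nat where "\<bar>real L - x\<bar> \<le> 1/2"
proof
  have "real (nat \<lfloor>x + 1/2\<rfloor>) = of_int \<lfloor>x + 1/2\<rfloor>" using assms by simp
  then show "\<bar>real (nat \<lfloor>x + 1/2\<rfloor>) - x\<bar> \<le> 1/2"
    unfolding abs_le_iff
    using of_int_floor_le[of "x + 1/2"] real_of_int_floor_add_one_gt[of "x + 1/2"] by linarith
qed

text \<open>\<open>L\<^sup>*(n) \<sim> log\<^sub>2 n / 2\<close>, so the nearest natural number is eventually available.\<close>
lemma Lstar_eventually_nonneg: "\<forall>\<^sub>F n in sequentially. 0 \<le> Lstar r n"
proof -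
  have "filterlim (\<lambda>n. Lstar r n) at_top sequentially"
    unfolding Lstar_def by real_asymp
  then show ?thesis by (simp add: filterlim_at_top)
qed

lemma excess_tendsto_zero:
  fixes x :: "nat \<Rightarrow> real"
  assumes "\<And>\<epsilon>. 0 < \<epsilon> \<Longrightarrow> \<forall>\<^sub>F n in sequentially. \<bar>x n\<bar> \<le> c + \<epsilon>"
  shows "(\<lambda>n. max 0 (\<bar>x n\<bar> - c)) \<longlonglongrightarrow> 0"
proof (rule order_tendstoI)
  fix a :: real assume "a < 0"
  then show "\<forall>\<^sub>F n in sequentially. a < max 0 (\<bar>x n\<bar> - c)"
    by (intro always_eventually) auto
next
  fix a :: real assume "0 < a"
  then have "\<forall>\<^sub>F n in sequentially. \<bar>x n\<bar> \<le> c + a / 2" using assms by simp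
  then show "\<forall>\<^sub>F n in sequentially. max 0 (\<bar>x n\<bar> - c) < a"
    by eventually_elim (use \<open>0 < a\<close> in auto)
qed

context
  fixes r :: nat and Lop :: "nat \<Rightarrow> nat"
  assumes r: "1 \<le> r"
    and Lop_min: "\<And>n L. 1 \<le> n \<Longrightarrow> G2 n r (Lop n) \<le> G2 n r L"
begin

text \<open>The minimal cost is at least \<open>(1-\<eta>) S twocosh(r (L\<^sub>o\<^sub>p - L\<^sup>*))\<close> and, by comparison
  with the integer nearest to \<open>L\<^sup>*\<close>, eventually at most \<open>(1+\<eta>) S twocosh(r/2)\<close>, up to constants.\<close>
lemma minimizer_sandwich:
  assumes \<eta>: "0 < \<eta>"
  obtains C where
    "\<And>n. 1 \<le> n \<Longrightarrow>
       (1 - \<eta>) * (bal r n * twocosh (real r * (real (Lop n) - Lstar r n))) - C \<le> G2 n r (Lop n)"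
    "\<forall>\<^sub>F n in sequentially. G2 n r (Lop n) \<le> (1 + \<eta>) * (bal r n * twocosh (real r / 2)) + C"
proof -
  obtain C where C: "\<And>n L. 1 \<le> n \<Longrightarrow>
    \<bar>G2 n r L - bal r n * twocosh (real r * (real L - Lstar r n))\<bar>
      \<le> \<eta> * (bal r n * twocosh (real r * (real L - Lstar r n))) + C"
    using G2_approx[OF r \<eta>] by blast
  show thesis
  proof (rule that)
    fix n :: nat assume "1 \<le> n"
    then show "(1 - \<eta>) * (bal r n * twocosh (real r * (real (Lop n) - Lstar r n))) - C
        \<le> G2 n r (Lop n)"
      using C[of n "Lop n"] by (simp add: algebra_simps)
  next
    show "\<forall>\<^sub>F n in sequentially. G2 n r (Lop n) \<le> (1 + \<eta>) * (bal r n * twocosh (real r / 2)) + C"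
      using eventually_ge_at_top[of "1::nat"] Lstar_eventually_nonneg[of r]
    proof eventually_elim
      case (elim n)
      obtain L0 :: nat where L0: "\<bar>real L0 - Lstar r n\<bar> \<le> 1/2"
        using nearest_nat[OF elim(2)] .
      have "\<bar>real r * (real L0 - Lstar r n)\<bar> \<le> \<bar>real r / 2\<bar>"
        using mult_left_mono[OF L0, of "real r"] by (simp add: abs_mult)
      then have "bal r n * twocosh (real r * (real L0 - Lstar r n)) \<le> bal r n * twocosh (real r / 2)"
        using bal_pos[OF r, of n] by (simp add: twocosh_mono_abs)
      then have "(1 + \<eta>) * (bal r n * twocosh (real r * (real L0 - Lstar r n)))
          \<le> (1 + \<eta>) * (bal r n * twocosh (real r / 2))"
        by (rule mult_left_mono) (use \<eta> in simp)
      then have "G2 n r L0 \<le> (1 + \<eta>) * (bal r n * twocosh (real r / 2)) + C"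
        using C[OF elim(1), of L0] by (simp add: algebra_simps abs_le_iff)
      then show ?case using Lop_min[OF elim(1), of L0] by linarith
    qed
  qed
qed

lemma Lop_near_Lstar:
  assumes \<epsilon>: "0 < \<epsilon>"
  shows "\<forall>\<^sub>F n in sequentially. \<bar>real (Lop n) - Lstar r n\<bar> \<le> 1/2 + \<epsilon>"
proof -
  define A B where "A = twocosh (real r / 2)" and "B = twocosh (real r * (1/2 + \<epsilon>))"
  have AB: "A < B" "2 \<le> A"
    unfolding A_def B_def using r \<epsilon> by (auto intro: twocosh_strict_mono_abs twocosh_ge_2)
  define \<eta> where "\<eta> = (B - A) / (2 * (B + A))"
  have "\<eta> * (B + A) = (B - A) / 2" unfolding \<eta>_def using AB by (simp add: field_simps)
  moreover have "(1 - \<eta>) * B - (1 + \<eta>) * A = (B - A) - \<eta> * (B + A)"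
    by (simp add: algebra_simps)
  ultimately have \<eta>: "0 < \<eta>" "(1 - \<eta>) * B - (1 + \<eta>) * A = (B - A) / 2"
    unfolding \<eta>_def using AB by auto
  obtain C where
    lower: "\<And>n. 1 \<le> n \<Longrightarrow>
       (1 - \<eta>) * (bal r n * twocosh (real r * (real (Lop n) - Lstar r n))) - C \<le> G2 n r (Lop n)"
    and upper: "\<forall>\<^sub>F n in sequentially. G2 n r (Lop n) \<le> (1 + \<eta>) * (bal r n * A) + C"
    using minimizer_sandwich[OF \<eta>(1)] unfolding A_def B_def by blast
  have "\<forall>\<^sub>F n in sequentially. 4 * C / (B - A) < bal r n" by (rule bal_unbounded[OF r])
  then show ?thesis using upper eventually_ge_at_top[of "1::nat"]
  proof eventually_elim
    case (elim n)
    show ?case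
    proof (rule ccontr)
      \<comment> \<open>Otherwise the minimal cost exceeds the cost near \<open>L\<^sup>*\<close> by a multiple of \<open>bal r n\<close>.\<close>
      assume "\<not> ?case"
      then have "\<bar>real r * (1/2 + \<epsilon>)\<bar> \<le> \<bar>real r * (real (Lop n) - Lstar r n)\<bar>"
        using r \<epsilon> by (simp add: abs_mult)
      then have "bal r n * B \<le> bal r n * twocosh (real r * (real (Lop n) - Lstar r n))"
        using bal_pos[OF r, of n] unfolding A_def B_def by (simp add: twocosh_mono_abs)
      then have "(1 - \<eta>) * (bal r n * B) - C \<le> (1 + \<eta>) * (bal r n * A) + C"
        using lower[OF elim(3)] elim(2) \<eta> AB unfolding \<eta>_def
        by (smt (verit) divide_le_eq_1_pos mult_left_mono)
      then have "bal r n * ((1 - \<eta>) * B - (1 + \<eta>) * A) \<le> 2 * C"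
        by (simp add: algebra_simps)
      then show False using elim(1) AB unfolding \<eta>(2) by (simp add: field_simps)
    qed
  qed
qed

text \<open>Second claim: with \<open>s = sqrt(2^r) \<ge> 2\<close>, the minimal cost lies between about
  \<open>2 S\<close> and \<open>S (s + 1/s)\<close>, hence strictly between \<open>2 S / s\<close> and \<open>2 S s\<close>.\<close>
lemma optimal_cost_bounds:
  assumes r2: "2 \<le> r"
  shows "\<forall>\<^sub>F n in sequentially.
           1 / sqrt (2 ^ r) * K r * real n powr (real r / 2) < G2 n r (Lop n) \<and>
           G2 n r (Lop n) < sqrt (2 ^ r) * K r * real n powr (real r / 2)"
proof -
  define s where "s = sqrt ((2::real) ^ r)"
  have "(4::real) \<le> 2 ^ r" using power_increasing[OF r2, of "2::real"] by simp
  then have s: "2 \<le> s" unfolding s_def using real_sqrt_le_mono[of 4 "2 ^ r"] by simp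
  have twocosh_half: "twocosh (real r / 2) = s + 1 / s"
    unfolding twocosh_def s_def
    by (simp add: powr_minus_divide powr_half_sqrt[symmetric] powr_powr powr_realpow[symmetric])
  obtain C1 where
    lower: "\<And>n. 1 \<le> n \<Longrightarrow>
      (1 - 1/4) * (bal r n * twocosh (real r * (real (Lop n) - Lstar r n))) - C1 \<le> G2 n r (Lop n)"
    using minimizer_sandwich[of "1/4"] by auto
  obtain C2 where
    upper: "\<forall>\<^sub>F n in sequentially. G2 n r (Lop n) \<le> (1 + 1/8) * (bal r n * (s + 1 / s)) + C2"
    using minimizer_sandwich[of "1/8"] unfolding twocosh_half by auto
  have "\<forall>\<^sub>F n in sequentially. 2 * C1 < bal r n" "\<forall>\<^sub>F n in sequentially. C2 < bal r n"
    by (rule bal_unbounded[OF r])+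
  then show ?thesis using upper eventually_ge_at_top[of "1::nat"] unfolding s_def[symmetric]
  proof eventually_elim
    case (elim n)
    have S: "0 < bal r n" by (rule bal_pos[OF r])
    \<comment> \<open>Lower bound: \<open>twocosh \<ge> 2\<close> and \<open>2 / s \<le> 1\<close>.\<close>
    have "2 * bal r n \<le> bal r n * twocosh (real r * (real (Lop n) - Lstar r n))"
      using S by (simp add: twocosh_ge_2)
    moreover have "2 * bal r n / s \<le> bal r n" using s S by (simp add: field_simps)
    moreover have "(1 - 1/4) * (bal r n * twocosh (real r * (real (Lop n) - Lstar r n)))
        = 3/4 * (bal r n * twocosh (real r * (real (Lop n) - Lstar r n)))" by simp
    ultimately have low: "2 * bal r n / s < G2 n r (Lop n)"
      using lower[OF elim(4)] elim(1) by linarith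
    \<comment> \<open>Upper bound: \<open>1 / s \<le> s / 4\<close> and \<open>bal r n \<le> s * bal r n / 2\<close>.\<close>
    have "4 \<le> s * s" using mult_mono[OF s s] s by simp
    then have "bal r n / s \<le> (bal r n * s) / 4" "bal r n \<le> (bal r n * s) / 2"
      using s S by (simp_all add: field_simps)
    moreover have "(1 + 1/8) * (bal r n * (s + 1 / s)) = 9/8 * (bal r n * s) + 9/8 * (bal r n / s)"
      by (simp add: algebra_simps)
    moreover have "0 < bal r n * s" using S s by simp
    ultimately have "G2 n r (Lop n) < 2 * (bal r n * s)"
      using elim(3) elim(2) by linarith
    then have up: "G2 n r (Lop n) < s * (2 * bal r n)" by (simp add: mult_ac)
    have "K r * real n powr (real r / 2) = 2 * bal r n" by (rule K_eq[OF r elim(4)])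
    then show ?case using low up by (simp only: mult.assoc) simp
  qed
qed

end

theorem theorem2:
  fixes r :: nat and Lop :: "nat \<Rightarrow> nat"
  assumes r: "r \<ge> 2"
    and Lop_min: "\<And>n L. n \<ge> 1 \<Longrightarrow> G2 n r (Lop n) \<le> G2 n r L"
  shows "(\<exists>\<delta> :: nat \<Rightarrow> real. \<delta> \<longlonglongrightarrow> 0 \<and>
            (\<forall>n\<ge>1. Lstar r n - 1/2 - \<delta> n \<le> real (Lop n) \<and>
                     real (Lop n) \<le> Lstar r n + 1/2 + \<delta> n))
       \<and> (\<forall>\<^sub>F n in sequentially.
            1 / sqrt (2 ^ r) * K r * real n powr (real r / 2) < G2 n r (Lop n) \<and>
            G2 n r (Lop n) < sqrt (2 ^ r) * K r * real n powr (real r / 2))"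
proof (intro conjI exI)
  have r1: "1 \<le> r" using r by simp
  define \<delta> where "\<delta> n = max 0 (\<bar>real (Lop n) - Lstar r n\<bar> - 1/2)" for n
  show "\<delta> \<longlonglongrightarrow> 0"
    unfolding \<delta>_def by (rule excess_tendsto_zero) (rule Lop_near_Lstar[OF r1 Lop_min])
  show "\<forall>n\<ge>1. Lstar r n - 1/2 - \<delta> n \<le> real (Lop n) \<and> real (Lop n) \<le> Lstar r n + 1/2 + \<delta> n"
    unfolding \<delta>_def by auto
  show "\<forall>\<^sub>F n in sequentially.
          1 / sqrt (2 ^ r) * K r * real n powr (real r / 2) < G2 n r (Lop n) \<and>
          G2 n r (Lop n) < sqrt (2 ^ r) * K r * real n powr (real r / 2)"
    by (rule optimal_cost_bounds[OF r1 Lop_min r])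
qed

end
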